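(* Let $A,B\in\mathrm{End}(\mathbb{R}^2)$ and consider the function $$F_{A,B}=\psi_B-\Big(\frac{\partial\psi_A}{\partial\theta}\Big)^2+\Big(\frac{\partial\psi_A}{\partial\phi}\Big)^2$$ on $\mathbb{T}$. (1) If $A\neq0$ is non-special, then for all $B$, $F_{A,B}$ is non-vanishing over an open dense subset of $Z_A$. (2) If $A\neq0$ is special and $B\neq0$ is not colinear with $A$, then $F_{A,B}$ is non-vanishing over an open dense subset of $Z_A$.
   Context: $\mathbb{T}=\mathbb{S}^1\times\mathbb{S}^1$ with coordinates $(\theta,\phi)$. For $A\in\mathrm{End}(\mathbb{R}^2)$, $\psi_A(\theta,\phi)=(\cos\theta,\sin\theta)A(\cos\phi,\sin\phi)^t$ and $Z_A=\psi_A^{-1}(\{0\})\subset\mathbb{T}$. A non-zero matrix $A$ is called special if it is a non-zero scalar multiple of an orthogonal matrix, and non-special otherwise. *)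

theory Defs
  imports "HOL-Analysis.Analysis"
begin

text \<open>The torus T = S^1 x S^1 is represented by its universal cover R x R with
  coordinates (theta, phi); all functions below are 2pi-periodic in both variables.\<close>

definition psi :: "real^2^2 \<Rightarrow> real \<times> real \<Rightarrow> real" where
  "psi A = (\<lambda>(\<theta>, \<phi>). (vector [cos \<theta>, sin \<theta>] :: real^2) \<bullet> (A *v (vector [cos \<phi>, sin \<phi>] :: real^2)))"

definition zero_set :: "real^2^2 \<Rightarrow> (real \<times> real) set" where
  "zero_set A = {p. psi A p = 0}"

definition d_theta :: "(real \<times> real \<Rightarrow> real) \<Rightarrow> real \<times> real \<Rightarrow> real" where
  "d_theta f = (\<lambda>(\<theta>, \<phi>). deriv (\<lambda>t. f (t, \<phi>)) \<theta>)"

definition d_phi :: "(real \<times> real \<Rightarrow> real) \<Rightarrow> real \<times> real \<Rightarrow> real" where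
  "d_phi f = (\<lambda>(\<theta>, \<phi>). deriv (\<lambda>t. f (\<theta>, t)) \<phi>)"

definition F_AB :: "real^2^2 \<Rightarrow> real^2^2 \<Rightarrow> real \<times> real \<Rightarrow> real" where
  "F_AB A B = (\<lambda>p. psi B p - (d_theta (psi A) p)\<^sup>2 + (d_phi (psi A) p)\<^sup>2)"

definition special :: "real^2^2 \<Rightarrow> bool" where
  "special A \<longleftrightarrow> A \<noteq> 0 \<and> (\<exists>c Q. c \<noteq> 0 \<and> orthogonal_matrix Q \<and> A = c *\<^sub>R Q)"

definition colinear_mat :: "real^2^2 \<Rightarrow> real^2^2 \<Rightarrow> bool" where
  "colinear_mat A B \<longleftrightarrow> (\<exists>c. B = c *\<^sub>R A) \<or> (\<exists>c. A = c *\<^sub>R B)"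

definition nonvanishing_open_dense :: "(real \<times> real \<Rightarrow> real) \<Rightarrow> (real \<times> real) set \<Rightarrow> bool" where
  "nonvanishing_open_dense f S \<longleftrightarrow>
     (\<exists>U. openin (top_of_set S) U \<and> S \<subseteq> closure U \<and> (\<forall>p\<in>U. f p \<noteq> 0))"

end

theory Submission
  imports Defs "HOL-Complex_Analysis.Conformal_Mappings"
begin

text \<open>Write psi_A(theta, phi) = P(theta) cos phi + Q(theta) sin phi and suppose F_{A,B} vanishes on
  Z_A near some point. If A has rank one, psi_A = L(theta) K(phi), so Z_A contains a vertical or a
  horizontal line through the point; along it F_{A,B} is a trigonometric polynomial vanishing on an
  interval, hence everywhere, and comparing its values at x and x + pi forces L = 0 or K = 0.
  If A is invertible, then s = P^2 + Q^2 > 0, and near the point Z_A is a continuous graph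
  theta |-> phi(theta) with (cos phi, sin phi) = k (-Q, P), k^2 s = 1. There
  F_{A,B} = k N - k^2 (det A^2 - s^2) with N = P Q_B - Q P_B, so the entire function
  s N^2 - (s^2 - det A^2)^2 vanishes on a real interval and hence on all of C. For special A the
  form s is constant, which leaves N = 0, i.e. B colinear with A; for non-special A the quadratic
  form s has a complex zero, where that entire function equals -det A^4, which is not 0.\<close>

lemma entire_zero_if_zero_near_real:
  fixes f :: "complex \<Rightarrow> complex"
  assumes "f holomorphic_on UNIV" "\<delta> > 0" "\<And>t. \<bar>t - t0\<bar> < \<delta> \<Longrightarrow> f (of_real t) = 0"
  shows "f z = 0"
proof (rule analytic_continuation[OF assms(1) open_UNIV connected_UNIV subset_UNIV UNIV_I _ _ UNIV_I])
  show "of_real t0 islimpt (of_real ` ball t0 \<delta> :: complex set)"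
    using \<open>\<delta> > 0\<close> by (intro islimpt_isCont_image) (auto simp: islimpt_ball eventually_at_filter)
  show "\<And>z. z \<in> of_real ` ball t0 \<delta> \<Longrightarrow> f z = 0"
    using assms(3) by (auto simp: dist_real_def abs_minus_commute)
qed

lemma real_zero_if_entire_extension_zero_near:
  fixes g :: "real \<Rightarrow> real" and f :: "complex \<Rightarrow> complex"
  assumes "f holomorphic_on UNIV" "\<And>t. f (of_real t) = of_real (g t)"
    and "\<delta> > 0" "\<And>t. \<bar>t - t0\<bar> < \<delta> \<Longrightarrow> g t = 0"
  shows "g t = 0"
proof -
  have "f (of_real t) = 0"
    by (rule entire_zero_if_zero_near_real[of f \<delta> t0]) (simp_all add: assms)
  then show ?thesis using assms(2) by simp
qed

lemma cos_sin_linear_plus_square_zero_near: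
  fixes a b c k1 k2 t0 \<delta> :: real
  assumes "\<delta> > 0"
    and zero: "\<And>t. \<bar>t - t0\<bar> < \<delta> \<Longrightarrow> a * cos t + b * sin t + c * (k1 * cos t + k2 * sin t)\<^sup>2 = 0"
  shows "c = 0 \<or> (k1 = 0 \<and> k2 = 0)"
proof -
  have everywhere: "a * cos t + b * sin t + c * (k1 * cos t + k2 * sin t)\<^sup>2 = 0" for t
  proof (rule real_zero_if_entire_extension_zero_near[OF _ _ \<open>\<delta> > 0\<close> zero])
    show "(\<lambda>z. of_real a * cos z + of_real b * sin z + of_real c * (of_real k1 * cos z + of_real k2 * sin z)\<^sup>2)
      holomorphic_on UNIV"
      by (intro holomorphic_intros)
  qed (simp add: cos_of_real sin_of_real)
  \<comment> \<open>t \<mapsto> t + pi flips the sign of the linear part and keeps the square\<close>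
  have "c * (k1 * cos t + k2 * sin t)\<^sup>2 = 0" for t
    using everywhere[of t] everywhere[of "t + pi"] by (simp add: power2_eq_square algebra_simps)
  from this[of 0] this[of "pi / 2"] show ?thesis by auto
qed

lemma cos_sin_comb_eq_0:
  fixes a b t :: real
  assumes "a * cos t + b * sin t = 0" "b * cos t - a * sin t = 0"
  shows "a = 0 \<and> b = 0"
proof -
  have "a = 0" "b = 0"
    using assms sin_cos_squared_add[of t] by algebra+
  then show ?thesis ..
qed

lemma cos_sin_quadratic_form_eq_0:
  fixes a b c :: real
  assumes "\<And>t. a * (cos t)\<^sup>2 + b * cos t * sin t + c * (sin t)\<^sup>2 = 0"
  shows "a = 0 \<and> b = 0 \<and> c = 0"
proof -
  have "a = 0" "c = 0" using assms[of 0] assms[of "pi / 2"] by simp_all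
  moreover have "b * (sqrt 2 / 2) * (sqrt 2 / 2) = 0"
    using assms[of "pi / 4"] \<open>a = 0\<close> \<open>c = 0\<close> by (simp add: cos_45 sin_45)
  ultimately show ?thesis by simp
qed

lemma ex_complex_zero_of_cos_sin_form:
  fixes m11 m12 m22 :: real
  assumes "\<not> (m11 = m22 \<and> m12 = 0)"
  shows "\<exists>z::complex. of_real m11 * (cos z)\<^sup>2 + 2 * of_real m12 * cos z * sin z + of_real m22 * (sin z)\<^sup>2 = 0"
proof -
  define a where "a = (m11 - m22) / 2"
  define R where "R = sqrt (a\<^sup>2 + m12\<^sup>2)"
  have nz: "a \<noteq> 0 \<or> m12 \<noteq> 0" using assms by (auto simp: a_def)
  then have "a\<^sup>2 + m12\<^sup>2 > 0" by (simp add: sum_power2_gt_zero_iff)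
  then have R: "R > 0" "R\<^sup>2 = a\<^sup>2 + m12\<^sup>2" by (auto simp: R_def)
  have "(a / R)\<^sup>2 + (m12 / R)\<^sup>2 = (a\<^sup>2 + m12\<^sup>2) / R\<^sup>2" by (simp add: power_divide add_divide_distrib)
  then have "(a / R)\<^sup>2 + (m12 / R)\<^sup>2 = 1" using R nz by simp
  then obtain w0 where w0: "a / R = cos w0" "m12 / R = sin w0"
    using sincos_total_2pi by metis
  define z :: complex where "z = (of_real w0 + Arccos (- of_real ((m11 + m22) / (2 * R)))) / 2"
  have quadratic: "of_real m11 * c\<^sup>2 + 2 * of_real m12 * c * s + of_real m22 * s\<^sup>2
      = of_real ((m11 + m22) / 2) * (c\<^sup>2 + s\<^sup>2) + of_real a * (c\<^sup>2 - s\<^sup>2) + of_real m12 * (2 * s * c)"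
    for c s :: complex
    by (simp add: a_def field_simps)
  have form: "of_real m11 * (cos z)\<^sup>2 + 2 * of_real m12 * cos z * sin z + of_real m22 * (sin z)\<^sup>2
      = of_real ((m11 + m22) / 2) + (of_real a * cos (2 * z) + of_real m12 * sin (2 * z))"
    using quadratic[of "cos z" "sin z"]
    by (simp only: cos_double sin_double sin_cos_squared_add2 mult_1_right add.assoc)
  have "of_real a * cos (2 * z) + of_real m12 * sin (2 * z) = of_real R * cos (2 * z - of_real w0)"
    using R(1) by (simp add: cos_diff cos_of_real sin_of_real flip: w0) (simp add: field_simps)
  also have "2 * z - of_real w0 = Arccos (- of_real ((m11 + m22) / (2 * R)))"
    by (simp add: z_def field_simps)
  also have "of_real R * cos (Arccos (- of_real ((m11 + m22) / (2 * R)))) = - of_real ((m11 + m22) / 2)"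
  proof -
    have "R * ((m11 + m22) / (2 * R)) = (m11 + m22) / 2" using R(1) by simp
    then show ?thesis by (simp only: cos_Arccos mult_minus_right flip: of_real_mult)
  qed
  finally have linear: "of_real a * cos (2 * z) + of_real m12 * sin (2 * z) = - of_real ((m11 + m22) / 2)" .
  have "of_real m11 * (cos z)\<^sup>2 + 2 * of_real m12 * cos z * sin z + of_real m22 * (sin z)\<^sup>2 = 0"
    unfolding form linear by simp
  then show ?thesis by (intro exI[of _ z])
qed

lemma continuous_at_angle_lift:
  fixes X Y :: "'a::t2_space \<Rightarrow> real"
  assumes "continuous (at t0) X" "continuous (at t0) Y"
    and "\<And>t. (X t)\<^sup>2 + (Y t)\<^sup>2 = 1" "X t0 = cos \<phi>0" "Y t0 = sin \<phi>0"
  obtains \<phi> where "continuous (at t0) \<phi>" "\<phi> t0 = \<phi>0" "\<And>t. cos (\<phi> t) = X t" "\<And>t. sin (\<phi> t) = Y t"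
proof
  define w where "w t = Complex (X t) (Y t) * cis (- \<phi>0)" for t
  have norm_w: "norm (w t) = 1" for t using assms(3)[of t]
    by (simp only: w_def norm_mult norm_cis) (simp add: cmod_def)
  have "w t0 = 1" by (simp add: w_def assms(4,5) cis.ctr [symmetric] cis_mult)
  define \<phi> where "\<phi> t = \<phi>0 + Arg (w t)" for t
  have "continuous (at t0) w"
  proof -
    have "w = (\<lambda>t. (of_real (X t) + \<i> * of_real (Y t)) * cis (- \<phi>0))"
      by (auto simp: w_def fun_eq_iff complex_eq_iff)
    then show ?thesis using assms(1,2) by (auto intro!: continuous_intros)
  qed
  moreover have "continuous (at (w t0)) Arg"
    unfolding \<open>w t0 = 1\<close> by (rule continuous_at_Arg) simp
  ultimately show "continuous (at t0) \<phi>"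
    unfolding \<phi>_def by (intro continuous_intros continuous_at_compose[unfolded o_def, of t0 w Arg])
  show "\<phi> t0 = \<phi>0" by (simp add: \<phi>_def \<open>w t0 = 1\<close>)
  have "cis (\<phi> t) = Complex (X t) (Y t)" for t
  proof -
    have "w t \<noteq> 0" using norm_w[of t] by auto
    then have "cis (Arg (w t)) = w t" using norm_w[of t] by (simp add: cis_Arg sgn_div_norm)
    have "cis (\<phi> t) = cis \<phi>0 * cis (Arg (w t))" by (simp add: \<phi>_def cis_mult)
    also have "\<dots> = Complex (X t) (Y t) * (cis \<phi>0 * cis (- \<phi>0))"
      unfolding \<open>cis (Arg (w t)) = w t\<close> by (simp add: w_def ac_simps)
    also have "\<dots> = Complex (X t) (Y t)" by (simp add: cis_mult)
    finally show ?thesis .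
  qed
  then show "cos (\<phi> t) = X t" "sin (\<phi> t) = Y t" for t by (simp_all add: complex_eq_iff)
qed

lemma det_2_squared:
  fixes A :: "real^2^2"
  shows "(det A)\<^sup>2 = (A$1 \<bullet> A$1) * (A$2 \<bullet> A$2) - (A$1 \<bullet> A$2)\<^sup>2"
  by (simp add: det_2 inner_vec_def sum_2 power2_eq_square algebra_simps)

lemma special_iff_rows: "special A \<longleftrightarrow> A \<noteq> 0 \<and> A$1 \<bullet> A$1 = A$2 \<bullet> A$2 \<and> A$1 \<bullet> A$2 = 0"
proof
  assume "special A"
  then obtain c Q where "A \<noteq> 0" "orthogonal_matrix Q" and A: "A = c *\<^sub>R Q"
    unfolding special_def by blast
  then have "Q$1 \<bullet> Q$1 = 1" "Q$2 \<bullet> Q$2 = 1" "Q$1 \<bullet> Q$2 = 0"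
    by (auto simp: orthogonal_matrix_orthonormal_rows row_def vec_lambda_eta orthogonal_def
        norm_eq_1)
  then show "A \<noteq> 0 \<and> A$1 \<bullet> A$1 = A$2 \<bullet> A$2 \<and> A$1 \<bullet> A$2 = 0"
    using \<open>A \<noteq> 0\<close> by (simp add: A)
next
  assume rows: "A \<noteq> 0 \<and> A$1 \<bullet> A$1 = A$2 \<bullet> A$2 \<and> A$1 \<bullet> A$2 = 0"
  define k where "k = norm (A$1)"
  have "A$1 \<noteq> 0"
  proof
    assume "A$1 = 0"
    moreover from this have "A$2 = 0" using rows by simp
    ultimately show False using rows by (simp add: vec_eq_iff forall_2)
  qed
  then have "k > 0" by (simp add: k_def)
  have "norm (A$2) = k" using rows by (simp add: k_def norm_eq_sqrt_inner)
  define Q where "Q = (1 / k) *\<^sub>R A"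
  have "row i Q = (1 / k) *\<^sub>R A$i" for i
    by (simp add: row_def Q_def vec_eq_iff)
  then have "orthogonal_matrix Q"
    unfolding orthogonal_matrix_orthonormal_rows
    using rows \<open>k > 0\<close> \<open>norm (A$2) = k\<close>
    by (auto simp: orthogonal_def forall_2 k_def inner_commute)
  moreover have "A = k *\<^sub>R Q" using \<open>k > 0\<close> by (simp add: Q_def)
  ultimately show "special A"
    unfolding special_def using rows \<open>k > 0\<close> by (intro conjI exI[of _ k] exI[of _ Q]) auto
qed

lemma rank_one_factor:
  fixes A :: "real^2^2"
  assumes "A \<noteq> 0" "det A = 0"
  obtains p1 p2 q1 q2 where "p1 \<noteq> 0 \<or> p2 \<noteq> 0" "q1 \<noteq> 0 \<or> q2 \<noteq> 0"
    "A$1$1 = p1 * q1" "A$1$2 = p1 * q2" "A$2$1 = p2 * q1" "A$2$2 = p2 * q2"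
proof (cases "A$1 = 0")
  case True
  with assms(1) have "A$2 \<noteq> 0" by (auto simp: vec_eq_iff forall_2)
  with True show ?thesis
    by (intro that[of 0 1 "A$2$1" "A$2$2"]) (auto simp: vec_eq_iff forall_2)
next
  case False
  then have n: "A$1 \<bullet> A$1 \<noteq> 0" by simp
  define l where "l = (A$1 \<bullet> A$2) / (A$1 \<bullet> A$1)"
  have "(A$2$1 - l * A$1$1) * (A$1 \<bullet> A$1) = 0" "(A$2$2 - l * A$1$2) * (A$1 \<bullet> A$1) = 0"
    using n assms(2) unfolding l_def det_2 inner_vec_def sum_2 by (simp_all add: field_simps)
  with n False show ?thesis
    by (intro that[of 1 l "A$1$1" "A$1$2"]) (auto simp: vec_eq_iff forall_2)
qed

text \<open>The coefficients of cos phi and sin phi in psi A (see psi_eq); they are defined over any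
  field with cos and sin so that they extend holomorphically to complex theta.\<close>

definition psi_coeff :: "real^2^2 \<Rightarrow> 2 \<Rightarrow> 'a::{real_normed_field,banach} \<Rightarrow> 'a" where
  "psi_coeff A j z = of_real (A$1$j) * cos z + of_real (A$2$j) * sin z"

lemma psi_coeff_real: "psi_coeff A j (t::real) = A$1$j * cos t + A$2$j * sin t"
  by (simp add: psi_coeff_def)

lemma psi_eq: "psi A (t, f) = psi_coeff A 1 t * cos f + psi_coeff A 2 t * sin f"
  by (simp add: psi_def psi_coeff_real inner_vec_def matrix_vector_mult_def sum_2 algebra_simps)

lemma d_theta_psi:
  "d_theta (psi A) (t, f) = (A$2$1 * cos t - A$1$1 * sin t) * cos f + (A$2$2 * cos t - A$1$2 * sin t) * sin f"
proof -
  have "((\<lambda>t. psi A (t, f)) has_real_derivative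
      (A$2$1 * cos t - A$1$1 * sin t) * cos f + (A$2$2 * cos t - A$1$2 * sin t) * sin f) (at t)"
    unfolding psi_eq psi_coeff_real by (auto intro!: derivative_eq_intros simp: algebra_simps)
  then show ?thesis by (simp add: d_theta_def DERIV_imp_deriv)
qed

lemma d_phi_psi: "d_phi (psi A) (t, f) = psi_coeff A 2 t * cos f - psi_coeff A 1 t * sin f"
proof -
  have "((\<lambda>f. psi A (t, f)) has_real_derivative psi_coeff A 2 t * cos f - psi_coeff A 1 t * sin f) (at f)"
    unfolding psi_eq by (auto intro!: derivative_eq_intros)
  then show ?thesis by (simp add: d_phi_def DERIV_imp_deriv)
qed

lemma continuous_on_F_AB: "continuous_on UNIV (F_AB A B)"
proof -
  have "F_AB A B = (\<lambda>q. psi_coeff B 1 (fst q) * cos (snd q) + psi_coeff B 2 (fst q) * sin (snd q)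
      - ((A$2$1 * cos (fst q) - A$1$1 * sin (fst q)) * cos (snd q)
         + (A$2$2 * cos (fst q) - A$1$2 * sin (fst q)) * sin (snd q))\<^sup>2
      + (psi_coeff A 2 (fst q) * cos (snd q) - psi_coeff A 1 (fst q) * sin (snd q))\<^sup>2)"
    by (auto simp: fun_eq_iff F_AB_def psi_eq d_theta_psi d_phi_psi)
  then show ?thesis unfolding psi_coeff_real by (auto intro!: continuous_intros)
qed

definition psi_norm2 :: "real^2^2 \<Rightarrow> 'a::{real_normed_field,banach} \<Rightarrow> 'a" where
  "psi_norm2 A z = (psi_coeff A 1 z)\<^sup>2 + (psi_coeff A 2 z)\<^sup>2"

lemma psi_norm2_eq:
  "psi_norm2 A z = of_real (A$1 \<bullet> A$1) * (cos z)\<^sup>2 + 2 * of_real (A$1 \<bullet> A$2) * cos z * sin z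
     + of_real (A$2 \<bullet> A$2) * (sin z)\<^sup>2"
  by (simp add: psi_norm2_def psi_coeff_def inner_vec_def sum_2 power2_eq_square algebra_simps)

lemma psi_norm2_pos:
  fixes t :: real
  assumes "det A \<noteq> 0"
  shows "psi_norm2 A t > 0"
proof -
  have "det A * cos t = A$2$2 * psi_coeff A 1 t - A$2$1 * psi_coeff A 2 t"
    "det A * sin t = A$1$1 * psi_coeff A 2 t - A$1$2 * psi_coeff A 1 t"
    by (simp_all add: psi_coeff_real det_2 algebra_simps)
  then have "psi_coeff A 1 t \<noteq> 0 \<or> psi_coeff A 2 t \<noteq> 0"
    using assms sin_zero_abs_cos_one[of t] by auto
  then show ?thesis by (simp add: psi_norm2_def sum_power2_gt_zero_iff)
qed

definition psi_wedge :: "real^2^2 \<Rightarrow> real^2^2 \<Rightarrow> 'a::{real_normed_field,banach} \<Rightarrow> 'a" where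
  "psi_wedge A B z = psi_coeff A 1 z * psi_coeff B 2 z - psi_coeff A 2 z * psi_coeff B 1 z"

lemma colinear_if_psi_wedge_zero:
  assumes "det A \<noteq> 0" "\<And>t::real. psi_wedge A B t = 0"
  shows "colinear_mat A B"
proof -
  have "(A$1$1 * B$1$2 - A$1$2 * B$1$1) * (cos t)\<^sup>2
      + (A$1$1 * B$2$2 + A$2$1 * B$1$2 - A$1$2 * B$2$1 - A$2$2 * B$1$1) * cos t * sin t
      + (A$2$1 * B$2$2 - A$2$2 * B$2$1) * (sin t)\<^sup>2 = 0" for t
    using assms(2)[of t] by (simp add: psi_wedge_def psi_coeff_real power2_eq_square algebra_simps)
  from cos_sin_quadratic_form_eq_0[OF this]
  have eqs: "A$1$1 * B$1$2 = A$1$2 * B$1$1" "A$2$1 * B$2$2 = A$2$2 * B$2$1"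
    "A$1$1 * B$2$2 + A$2$1 * B$1$2 = A$1$2 * B$2$1 + A$2$2 * B$1$1"
    by simp_all
  define k where "k = (B$1$1 * A$2$2 - B$1$2 * A$2$1) / det A"
  have "B$1$1 * det A = (B$1$1 * A$2$2 - B$1$2 * A$2$1) * A$1$1"
    "B$1$2 * det A = (B$1$1 * A$2$2 - B$1$2 * A$2$1) * A$1$2"
    "B$2$1 * det A = (B$1$1 * A$2$2 - B$1$2 * A$2$1) * A$2$1"
    "B$2$2 * det A = (B$1$1 * A$2$2 - B$1$2 * A$2$1) * A$2$2"
    using eqs unfolding det_2 by algebra+
  then have "B = k *\<^sub>R A"
    using assms(1) by (simp add: vec_eq_iff forall_2 k_def field_simps)
  then show ?thesis unfolding colinear_mat_def by blast
qed

text \<open>Eliminating k from F_AB A B (t, phi) = 0 by means of F_AB_on_zero_set and k^2 s = 1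
  (zero_set_cos_sin) leaves this function of t alone.\<close>

definition obstruction :: "real^2^2 \<Rightarrow> real^2^2 \<Rightarrow> 'a::{real_normed_field,banach} \<Rightarrow> 'a" where
  "obstruction A B z = psi_norm2 A z * (psi_wedge A B z)\<^sup>2 - ((psi_norm2 A z)\<^sup>2 - of_real ((det A)\<^sup>2))\<^sup>2"

lemma obstruction_holomorphic: "(obstruction A B :: complex \<Rightarrow> complex) holomorphic_on UNIV"
  unfolding obstruction_def psi_norm2_def psi_wedge_def psi_coeff_def by (intro holomorphic_intros)

lemma obstruction_of_real: "obstruction A B (of_real t :: complex) = of_real (obstruction A B t)"
  by (simp add: obstruction_def psi_norm2_def psi_wedge_def psi_coeff_def cos_of_real sin_of_real)

lemma zero_set_cos_sin:
  fixes t \<phi> :: real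
  assumes "(t, \<phi>) \<in> zero_set A" "psi_norm2 A t \<noteq> 0"
  obtains k where "cos \<phi> = - k * psi_coeff A 2 t" "sin \<phi> = k * psi_coeff A 1 t"
    "k\<^sup>2 * psi_norm2 A t = 1"
proof
  define P Q s where "P = psi_coeff A 1 t" "Q = psi_coeff A 2 t" "s = psi_norm2 A t"
  have s: "s = P\<^sup>2 + Q\<^sup>2" "s \<noteq> 0" using assms(2) by (simp_all add: P_Q_s_def psi_norm2_def)
  have zero: "P * cos \<phi> + Q * sin \<phi> = 0" using assms(1) by (simp add: zero_set_def psi_eq P_Q_s_def)
  define k where "k = (P * sin \<phi> - Q * cos \<phi>) / s"
  have "s * cos \<phi> = - (P * sin \<phi> - Q * cos \<phi>) * Q" "s * sin \<phi> = (P * sin \<phi> - Q * cos \<phi>) * P"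
    using zero unfolding s(1) by algebra+
  then show "cos \<phi> = - k * Q" "sin \<phi> = k * P" using s(2) by (simp_all add: k_def field_simps)
  have "(P * sin \<phi> - Q * cos \<phi>)\<^sup>2 = s"
    using zero sin_cos_squared_add[of \<phi>] unfolding s(1) by algebra
  then show "k\<^sup>2 * s = 1" using s(2) by (simp add: k_def power_divide power2_eq_square)
qed

lemma F_AB_on_zero_set:
  fixes t \<phi> k :: real
  assumes "cos \<phi> = - k * psi_coeff A 2 t" "sin \<phi> = k * psi_coeff A 1 t"
  shows "F_AB A B (t, \<phi>) = k * psi_wedge A B t - k\<^sup>2 * ((det A)\<^sup>2 - (psi_norm2 A t)\<^sup>2)"
proof -
  have "psi B (t, \<phi>) = k * psi_wedge A B t"
    by (simp add: psi_eq psi_wedge_def assms algebra_simps)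
  moreover have "d_theta (psi A) (t, \<phi>) = k * det A"
    unfolding d_theta_psi assms psi_coeff_real det_2 using sin_cos_squared_add[of t] by algebra
  moreover have "d_phi (psi A) (t, \<phi>) = - k * psi_norm2 A t"
    by (simp add: d_phi_psi psi_norm2_def assms power2_eq_square algebra_simps)
  ultimately show ?thesis by (simp add: F_AB_def power_mult_distrib algebra_simps)
qed

lemma obstruction_zero_if_F_AB_zero:
  fixes t \<phi> :: real
  assumes "(t, \<phi>) \<in> zero_set A" "F_AB A B (t, \<phi>) = 0" "psi_norm2 A t \<noteq> 0"
  shows "obstruction A B t = 0"
proof -
  obtain k where cs: "cos \<phi> = - k * psi_coeff A 2 t" "sin \<phi> = k * psi_coeff A 1 t"
    and k: "k\<^sup>2 * psi_norm2 A t = 1"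
    using zero_set_cos_sin[OF assms(1,3)] by blast
  have "k * psi_wedge A B t = k\<^sup>2 * ((det A)\<^sup>2 - (psi_norm2 A t)\<^sup>2)"
    using F_AB_on_zero_set[OF cs, of B] assms(2) by simp
  then show ?thesis
    using k unfolding obstruction_def of_real_eq_id id_def by algebra
qed

lemma zero_set_local_branch:
  assumes "det A \<noteq> 0" "(t0, \<phi>0) \<in> zero_set A"
  obtains \<phi> where "continuous (at t0) \<phi>" "\<phi> t0 = \<phi>0" "\<And>t. (t, \<phi> t) \<in> zero_set A"
proof -
  define P Q s :: "real \<Rightarrow> real" where "P = psi_coeff A 1" "Q = psi_coeff A 2" "s = psi_norm2 A"
  have s: "s t = (P t)\<^sup>2 + (Q t)\<^sup>2" "s t > 0" for t
    using psi_norm2_pos[OF assms(1)] by (simp_all add: P_Q_s_def psi_norm2_def)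
  obtain k0 where cs0: "cos \<phi>0 = - k0 * Q t0" "sin \<phi>0 = k0 * P t0" and k0: "k0\<^sup>2 * s t0 = 1"
    using zero_set_cos_sin[OF assms(2)] s(2)[of t0] unfolding P_Q_s_def by force
  \<comment> \<open>(- c t * Q t, c t * P t) is a unit vector orthogonal to (P t, Q t), equal to (cos phi0, sin phi0) at t0\<close>
  define c where "c t = k0 * sqrt (s t0 / s t)" for t
  have c: "(c t)\<^sup>2 * s t = 1" for t
    using k0 s(2)[of t] s(2)[of t0] by (simp add: c_def power_mult_distrib)
  have "c t0 = k0" using s(2)[of t0] by (simp add: c_def)
  have "continuous (at t0) c"
    using s(2)[of t0] unfolding c_def P_Q_s_def psi_norm2_def psi_coeff_real
    by (auto intro!: continuous_intros)
  moreover have "continuous (at t0) P" "continuous (at t0) Q"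
    unfolding P_Q_s_def psi_coeff_real by (auto intro!: continuous_intros)
  ultimately have "continuous (at t0) (\<lambda>t. - c t * Q t)" "continuous (at t0) (\<lambda>t. c t * P t)"
    by (auto intro!: continuous_intros)
  moreover have "(- c t * Q t)\<^sup>2 + (c t * P t)\<^sup>2 = 1" for t
    using c[of t] s(1)[of t] by (simp add: power_mult_distrib algebra_simps)
  ultimately obtain \<phi> where \<phi>: "continuous (at t0) \<phi>" "\<phi> t0 = \<phi>0"
    and cos_\<phi>: "\<And>t. cos (\<phi> t) = - c t * Q t" and sin_\<phi>: "\<And>t. sin (\<phi> t) = c t * P t"
    using continuous_at_angle_lift[of t0 "\<lambda>t. - c t * Q t" "\<lambda>t. c t * P t" \<phi>0] cs0 \<open>c t0 = k0\<close>
    by auto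
  moreover have "(t, \<phi> t) \<in> zero_set A" for t
    by (simp add: zero_set_def psi_eq cos_\<phi> sin_\<phi> flip: P_Q_s_def)
  ultimately show ?thesis using that by blast
qed

lemma obstruction_eq_0_if_F_AB_vanishes_near:
  assumes "det A \<noteq> 0" "(t0, \<phi>0) \<in> zero_set A" "\<epsilon> > 0"
    and vanish: "\<And>y. y \<in> zero_set A \<Longrightarrow> dist y (t0, \<phi>0) < \<epsilon> \<Longrightarrow> F_AB A B y = 0"
  shows "obstruction A B (z::complex) = 0"
proof -
  obtain \<phi> where "continuous (at t0) \<phi>" "\<phi> t0 = \<phi>0" and branch: "\<And>t. (t, \<phi> t) \<in> zero_set A"
    using zero_set_local_branch[OF assms(1,2)] by blast
  then have "continuous (at t0) (\<lambda>t. (t, \<phi> t))" by (intro continuous_intros)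
  then obtain \<delta> where "\<delta> > 0" and near: "\<And>t. dist t t0 < \<delta> \<Longrightarrow> dist (t, \<phi> t) (t0, \<phi>0) < \<epsilon>"
    using \<open>\<epsilon> > 0\<close> \<open>\<phi> t0 = \<phi>0\<close> unfolding continuous_at_eps_delta by force
  have "obstruction A B (of_real t :: complex) = 0" if "\<bar>t - t0\<bar> < \<delta>" for t
  proof -
    have "F_AB A B (t, \<phi> t) = 0"
      using that by (intro vanish branch near) (simp add: dist_real_def)
    then have "obstruction A B t = 0"
      using psi_norm2_pos[OF assms(1), of t] by (intro obstruction_zero_if_F_AB_zero[OF branch]) auto
    then show ?thesis by (simp add: obstruction_of_real)
  qed
  then show ?thesis
    using entire_zero_if_zero_near_real[OF obstruction_holomorphic \<open>\<delta> > 0\<close>] by blast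
qed

lemma F_AB_nonzero_near_rank_one:
  assumes "A \<noteq> 0" "det A = 0" "q \<in> zero_set A" "\<epsilon> > 0"
  shows "\<exists>y\<in>zero_set A. dist y q < \<epsilon> \<and> F_AB A B y \<noteq> 0"
proof (rule ccontr)
  assume "\<not> ?thesis"
  then have vanish: "\<And>y. y \<in> zero_set A \<Longrightarrow> dist y q < \<epsilon> \<Longrightarrow> F_AB A B y = 0" by auto
  obtain t0 f0 where q: "q = (t0, f0)" by fastforce
  obtain p1 p2 q1 q2 where p: "p1 \<noteq> 0 \<or> p2 \<noteq> 0" and q12: "q1 \<noteq> 0 \<or> q2 \<noteq> 0"
    and A: "A$1$1 = p1 * q1" "A$1$2 = p1 * q2" "A$2$1 = p2 * q1" "A$2$2 = p2 * q2"
    using rank_one_factor[OF assms(1,2)] by blast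
  define L L' K K' where "L t = p1 * cos t + p2 * sin t" "L' t = p2 * cos t - p1 * sin t"
    "K t = q1 * cos t + q2 * sin t" "K' t = q2 * cos t - q1 * sin t" for t
  have psi_LK: "psi A (t, f) = L t * K f" for t f
    by (simp add: psi_eq psi_coeff_real A L_L'_K_K'_def algebra_simps)
  have F_LK: "F_AB A B (t, f) = psi B (t, f) - (L' t * K f)\<^sup>2 + (L t * K' f)\<^sup>2" for t f
    by (simp add: F_AB_def d_theta_psi d_phi_psi psi_coeff_real A L_L'_K_K'_def algebra_simps)
  have "L t0 * K f0 = 0" using assms(3) by (simp add: q zero_set_def psi_LK)
  then consider "L t0 = 0" | "K f0 = 0" by auto
  then show False
  proof cases
    case 1
    have "psi_coeff B 1 t0 * cos f + psi_coeff B 2 t0 * sin f + (- (L' t0)\<^sup>2) * (K f)\<^sup>2 = 0"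
      if "\<bar>f - f0\<bar> < \<epsilon>" for f
    proof -
      have "F_AB A B (t0, f) = 0"
        using 1 that by (intro vanish) (simp_all add: q zero_set_def psi_LK dist_Pair_Pair dist_real_def)
      then show ?thesis using 1 by (simp add: F_LK psi_eq power_mult_distrib)
    qed
    then have "L' t0 = 0 \<or> (q1 = 0 \<and> q2 = 0)"
      using cos_sin_linear_plus_square_zero_near[OF assms(4)] unfolding L_L'_K_K'_def by fastforce
    then show False using 1 p q12 cos_sin_comb_eq_0[of p1 t0 p2] by (auto simp: L_L'_K_K'_def)
  next
    case 2
    have "psi_coeff (transpose B) 1 f0 * cos t + psi_coeff (transpose B) 2 f0 * sin t + (K' f0)\<^sup>2 * (L t)\<^sup>2 = 0"
      if "\<bar>t - t0\<bar> < \<epsilon>" for t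
    proof -
      have "F_AB A B (t, f0) = 0"
        using 2 that by (intro vanish) (simp_all add: q zero_set_def psi_LK dist_Pair_Pair dist_real_def)
      then show ?thesis using 2
        by (simp add: F_LK psi_eq psi_coeff_real transpose_def power_mult_distrib algebra_simps)
    qed
    then have "K' f0 = 0 \<or> (p1 = 0 \<and> p2 = 0)"
      using cos_sin_linear_plus_square_zero_near[OF assms(4)] unfolding L_L'_K_K'_def by fastforce
    then show False using 2 p q12 cos_sin_comb_eq_0[of q1 f0 q2] by (auto simp: L_L'_K_K'_def)
  qed
qed

lemma F_AB_nonzero_near_invertible:
  assumes "det A \<noteq> 0" "\<not> (special A \<and> colinear_mat A B)" "q \<in> zero_set A" "\<epsilon> > 0"
  shows "\<exists>y\<in>zero_set A. dist y q < \<epsilon> \<and> F_AB A B y \<noteq> 0"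
proof (rule ccontr)
  assume "\<not> ?thesis"
  moreover obtain t0 \<phi>0 where q: "q = (t0, \<phi>0)" by fastforce
  ultimately have obstruction: "obstruction A B (z::complex) = 0" for z
    using obstruction_eq_0_if_F_AB_vanishes_near[OF assms(1) _ assms(4)] assms(3) by auto
  have "A \<noteq> 0" using assms(1) by (auto simp: det_2)
  show False
  proof (cases "special A")
    case True
    then have rows: "A$1 \<bullet> A$1 = A$2 \<bullet> A$2" "A$1 \<bullet> A$2 = 0" by (simp_all add: special_iff_rows)
    define m where "m = A$1 \<bullet> A$1"
    have "(det A)\<^sup>2 = m\<^sup>2" using rows det_2_squared[of A] by (simp add: m_def power2_eq_square)
    with assms(1) have "m \<noteq> 0" by auto
    have "psi_norm2 A t = m" for t :: real
      using rows by (simp add: psi_norm2_eq m_def flip: distrib_left)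
    have obstruction_real: "obstruction A B t = 0" for t :: real
      using obstruction[of "of_real t"] by (simp only: obstruction_of_real of_real_eq_0_iff)
    have "m * (psi_wedge A B t)\<^sup>2 = 0" for t :: real
      using obstruction_real[of t] by (simp add: obstruction_def \<open>psi_norm2 A t = m\<close> \<open>(det A)\<^sup>2 = m\<^sup>2\<close>)
    then have "colinear_mat A B"
      using colinear_if_psi_wedge_zero[OF assms(1)] \<open>m \<noteq> 0\<close> by simp
    with True assms(2) show False by blast
  next
    case False
    with \<open>A \<noteq> 0\<close> have "\<not> (A$1 \<bullet> A$1 = A$2 \<bullet> A$2 \<and> A$1 \<bullet> A$2 = 0)"
      by (simp add: special_iff_rows)
    then obtain z :: complex where "psi_norm2 A z = 0"
      using ex_complex_zero_of_cos_sin_form unfolding psi_norm2_eq by blast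
    then have "obstruction A B z = - (of_real ((det A)\<^sup>2))\<^sup>2" by (simp add: obstruction_def)
    with obstruction[of z] assms(1) show False by simp
  qed
qed

lemma nonvanishing_open_dense_if_nonzero_near:
  assumes "continuous_on UNIV f"
    and "\<And>q \<epsilon>. q \<in> S \<Longrightarrow> \<epsilon> > 0 \<Longrightarrow> \<exists>y\<in>S. dist y q < \<epsilon> \<and> f y \<noteq> 0"
  shows "nonvanishing_open_dense f S"
proof -
  have "openin (top_of_set S) (S \<inter> {q. f q \<noteq> 0})"
    using open_Collect_neq[OF assms(1) continuous_on_const] by (rule openin_open_Int)
  moreover have "S \<subseteq> closure (S \<inter> {q. f q \<noteq> 0})"
    unfolding subset_iff closure_approachable using assms(2) by blast
  ultimately show ?thesis unfolding nonvanishing_open_dense_def by blast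
qed

theorem lemma2p6:
  fixes A B :: "real^2^2"
  shows "(A \<noteq> 0 \<and> \<not> special A \<longrightarrow> nonvanishing_open_dense (F_AB A B) (zero_set A))
       \<and> (A \<noteq> 0 \<and> special A \<and> B \<noteq> 0 \<and> \<not> colinear_mat A B
            \<longrightarrow> nonvanishing_open_dense (F_AB A B) (zero_set A))"
proof -
  have "nonvanishing_open_dense (F_AB A B) (zero_set A)"
    if "A \<noteq> 0" "\<not> (special A \<and> colinear_mat A B)"
  proof (rule nonvanishing_open_dense_if_nonzero_near[OF continuous_on_F_AB])
    fix q and \<epsilon> :: real assume "q \<in> zero_set A" "\<epsilon> > 0"
    then show "\<exists>y\<in>zero_set A. dist y q < \<epsilon> \<and> F_AB A B y \<noteq> 0"
      using F_AB_nonzero_near_rank_one F_AB_nonzero_near_invertible that by (cases "det A = 0") auto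
  qed
  then show ?thesis by blast
qed

end
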